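(* Let $A=\mathbb{C}[x,y,z]$, let $s,t\in A\setminus\{0\}$ be coprime and equip $A$ with the Poisson bracket $\{x,y\}=t s_z-s t_z$, $\{y,z\}=t s_x-s t_x$, $\{z,x\}=t s_y-s t_y$. Let $(\lambda,\mu)\in\mathbb{P}^1(\mathbb{C})$ be such that $f_{\lambda,\mu}:=\lambda s-\mu t$ is a non-zero non-unit and let $u$ be an irreducible factor of $f_{\lambda,\mu}$ in $A$. Then $f_{\lambda,\mu}A$ is a Poisson ideal and $uA$ is a Poisson prime ideal of $A$.
   Context: Subscripts denote partial derivatives. A Poisson ideal is an ideal $I$ with $\{a,I\}\subseteq I$ for all $a\in A$; a Poisson prime ideal is a Poisson ideal that is prime. *)

theory Defs
  imports "HOL-Computational_Algebra.Computational_Algebra"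
begin

text \<open>A = C[x,y,z] is modelled as ((C[x])[y])[z]: the outermost polynomial
variable is z, the middle one y, the innermost one x.\<close>

type_synonym cpoly3 = "complex poly poly poly"

definition X3 :: cpoly3 where "X3 = [:[:[:0, 1:]:]:]"
definition Y3 :: cpoly3 where "Y3 = [:[:0, 1:]:]"
definition Z3 :: cpoly3 where "Z3 = [:0, 1:]"

definition const3 :: "complex \<Rightarrow> cpoly3" where "const3 c = [:[:[:c:]:]:]"

definition dx :: "cpoly3 \<Rightarrow> cpoly3" where "dx f = map_poly (map_poly pderiv) f"
definition dy :: "cpoly3 \<Rightarrow> cpoly3" where "dy f = map_poly pderiv f"
definition dz :: "cpoly3 \<Rightarrow> cpoly3" where "dz f = pderiv f"

definition pbr :: "cpoly3 \<Rightarrow> cpoly3 \<Rightarrow> cpoly3 \<Rightarrow> cpoly3 \<Rightarrow> cpoly3" where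
  "pbr s t f g =
     (t * dx s - s * dx t) * (dy f * dz g - dz f * dy g)
   + (t * dy s - s * dy t) * (dz f * dx g - dx f * dz g)
   + (t * dz s - s * dz t) * (dx f * dy g - dy f * dx g)"

definition is_ideal :: "'a::comm_ring_1 set \<Rightarrow> bool" where
  "is_ideal I \<longleftrightarrow> 0 \<in> I \<and> (\<forall>a\<in>I. \<forall>b\<in>I. a + b \<in> I) \<and> (\<forall>r. \<forall>a\<in>I. r * a \<in> I)"

definition is_prime_ideal :: "'a::comm_ring_1 set \<Rightarrow> bool" where
  "is_prime_ideal I \<longleftrightarrow> is_ideal I \<and> I \<noteq> UNIV \<and> (\<forall>a b. a * b \<in> I \<longrightarrow> a \<in> I \<or> b \<in> I)"

definition principal_ideal :: "'a::comm_ring_1 \<Rightarrow> 'a set" where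
  "principal_ideal f = {f * a | a. True}"

definition poisson_ideal :: "('a \<Rightarrow> 'a \<Rightarrow> 'a) \<Rightarrow> 'a::comm_ring_1 set \<Rightarrow> bool" where
  "poisson_ideal br I \<longleftrightarrow> is_ideal I \<and> (\<forall>a. \<forall>b\<in>I. br a b \<in> I)"

definition poisson_prime_ideal :: "('a \<Rightarrow> 'a \<Rightarrow> 'a) \<Rightarrow> 'a::comm_ring_1 set \<Rightarrow> bool" where
  "poisson_prime_ideal br I \<longleftrightarrow> poisson_ideal br I \<and> is_prime_ideal I"

end

theory Submission
  imports Defs "HOL-Computational_Algebra.Field_as_Ring"
begin

text \<open>Write \<open>W(s,t) = t \<nabla>s - s \<nabla>t\<close>, so that \<open>{a,b} = W(s,t) \<cdot> (\<nabla>a \<times> \<nabla>b)\<close>.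
  Since \<open>W\<close> is bilinear over constants and alternating, \<open>\<lambda> W(s,t) = W(f,t)\<close> for
  \<open>f = \<lambda>s - \<mu>t\<close>. If \<open>f = u g\<close> then \<open>W(u g, t) = u W(g,t) + t g \<nabla>u\<close>, and the second
  summand is killed by the triple product with \<open>\<nabla>u\<close>; hence \<open>\<lambda> {a,u} \<in> u A\<close>. As
  \<open>{a,-}\<close> is a derivation, \<open>u A\<close> is then a Poisson ideal (for \<open>\<lambda> = 0\<close> swap \<open>s\<close> and
  \<open>t\<close>), and it is prime because irreducible elements of the factorial ring \<open>A\<close> are prime.\<close>

definition is_derivation :: "('a::comm_ring_1 \<Rightarrow> 'a) \<Rightarrow> bool" where
  "is_derivation D \<longleftrightarrow> (\<forall>a b. D (a + b) = D a + D b) \<and> (\<forall>a b. D (a * b) = a * D b + D a * b)"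

lemma derivation_add: "is_derivation D \<Longrightarrow> D (a + b) = D a + D b"
  unfolding is_derivation_def by blast

lemma derivation_mult: "is_derivation D \<Longrightarrow> D (a * b) = a * D b + D a * b"
  unfolding is_derivation_def by blast

lemma derivation_0: "is_derivation D \<Longrightarrow> D 0 = 0"
  using derivation_add[of D 0 0] by simp

lemma derivation_diff: "is_derivation D \<Longrightarrow> D (a - b) = D a - D b"
  using derivation_add[of D "a - b" b] by (simp add: algebra_simps)

lemma derivation_sum: "is_derivation D \<Longrightarrow> D (sum f A) = (\<Sum>i\<in>A. D (f i))"
  by (induction A rule: infinite_finite_induct) (simp_all add: derivation_0 derivation_add)

lemma is_derivation_pderiv: "is_derivation (pderiv :: 'a::idom poly \<Rightarrow> _)"
  unfolding is_derivation_def by (simp add: pderiv_add pderiv_mult algebra_simps)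

lemma is_derivation_map_poly:
  assumes D: "is_derivation D"
  shows "is_derivation (map_poly D)"
proof -
  have D0: "D 0 = 0" using D by (rule derivation_0)
  have "map_poly D (p * q) = p * map_poly D q + map_poly D p * q" for p q
  proof (rule poly_eqI)
    fix n
    have "coeff (map_poly D (p * q)) n = D (\<Sum>i\<le>n. coeff p i * coeff q (n - i))"
      by (simp add: coeff_map_poly D0 coeff_mult)
    also have "\<dots> = (\<Sum>i\<le>n. coeff p i * D (coeff q (n - i))) + (\<Sum>i\<le>n. D (coeff p i) * coeff q (n - i))"
      by (simp add: derivation_sum[OF D] derivation_mult[OF D] sum.distrib)
    also have "\<dots> = coeff (p * map_poly D q + map_poly D p * q) n"
      by (simp add: coeff_mult coeff_map_poly D0)
    finally show "coeff (map_poly D (p * q)) n = coeff (p * map_poly D q + map_poly D p * q) n" .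
  qed
  moreover have "map_poly D (p + q) = map_poly D p + map_poly D q" for p q
    by (rule poly_eqI) (simp add: coeff_map_poly D0 derivation_add[OF D])
  ultimately show ?thesis
    unfolding is_derivation_def by blast
qed

lemma is_derivation_dx: "is_derivation dx"
  unfolding dx_def[abs_def] by (intro is_derivation_map_poly is_derivation_pderiv)

lemma is_derivation_dy: "is_derivation dy"
  unfolding dy_def[abs_def] by (intro is_derivation_map_poly is_derivation_pderiv)

lemma is_derivation_dz: "is_derivation dz"
  unfolding dz_def[abs_def] by (rule is_derivation_pderiv)

lemma derivative_const3: "dx (const3 c) = 0" "dy (const3 c) = 0" "dz (const3 c) = 0"
  by (simp_all add: dx_def dy_def dz_def const3_def pderiv_pCons map_poly_pCons)

definition wronskian :: "('a::comm_ring_1 \<Rightarrow> 'a) \<Rightarrow> 'a \<Rightarrow> 'a \<Rightarrow> 'a" where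
  "wronskian D f g = f * D g - D f * g"

lemma wronskian_combination_right:
  assumes "is_derivation D" "D l = 0" "D m = 0"
  shows "wronskian D t (l * s - m * t) = l * wronskian D t s"
  using assms by (simp add: wronskian_def derivation_diff derivation_mult algebra_simps)

lemma wronskian_mult_right:
  assumes "is_derivation D"
  shows "wronskian D t (u * g) = u * wronskian D t g + t * g * D u"
  using assms by (simp add: wronskian_def derivation_mult algebra_simps)

definition jacobian_bracket ::
    "('a::comm_ring_1 \<Rightarrow> 'a) \<Rightarrow> ('a \<Rightarrow> 'a) \<Rightarrow> ('a \<Rightarrow> 'a) \<Rightarrow> 'a \<Rightarrow> 'a \<Rightarrow> 'a \<Rightarrow> 'a \<Rightarrow> 'a" where
  "jacobian_bracket D1 D2 D3 s t a b =
     wronskian D1 t s * (D2 a * D3 b - D3 a * D2 b)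
   + wronskian D2 t s * (D3 a * D1 b - D1 a * D3 b)
   + wronskian D3 t s * (D1 a * D2 b - D2 a * D1 b)"

lemma pbr_eq_jacobian_bracket: "pbr s t = jacobian_bracket dx dy dz s t"
  by (simp add: fun_eq_iff pbr_def jacobian_bracket_def wronskian_def mult.commute)

lemma jacobian_bracket_swap: "jacobian_bracket D1 D2 D3 t s a b = - jacobian_bracket D1 D2 D3 s t a b"
  by (simp add: jacobian_bracket_def wronskian_def algebra_simps)

lemma jacobian_bracket_combination_left:
  assumes "is_derivation D1" "is_derivation D2" "is_derivation D3"
    and "D1 l = 0" "D2 l = 0" "D3 l = 0" "D1 m = 0" "D2 m = 0" "D3 m = 0"
  shows "jacobian_bracket D1 D2 D3 (l * s - m * t) t a b = l * jacobian_bracket D1 D2 D3 s t a b"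
  using assms by (simp add: jacobian_bracket_def wronskian_combination_right algebra_simps)

lemma jacobian_bracket_mult_left_self:
  assumes "is_derivation D1" "is_derivation D2" "is_derivation D3"
  shows "jacobian_bracket D1 D2 D3 (u * g) t a u = u * jacobian_bracket D1 D2 D3 g t a u"
  unfolding jacobian_bracket_def wronskian_mult_right[OF assms(1)]
    wronskian_mult_right[OF assms(2)] wronskian_mult_right[OF assms(3)]
  by (simp add: algebra_simps)

lemma jacobian_bracket_mult_right:
  assumes "is_derivation D1" "is_derivation D2" "is_derivation D3"
  shows "jacobian_bracket D1 D2 D3 s t a (u * c)
    = u * jacobian_bracket D1 D2 D3 s t a c + c * jacobian_bracket D1 D2 D3 s t a u"
  using assms by (simp add: jacobian_bracket_def derivation_mult algebra_simps)

lemma dvd_jacobian_bracket_self: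
  assumes D: "is_derivation D1" "is_derivation D2" "is_derivation D3"
    and const: "D1 l = 0" "D2 l = 0" "D3 l = 0" "D1 m = 0" "D2 m = 0" "D3 m = 0"
    and "is_unit l" and "u dvd l * s - m * t"
  shows "u dvd jacobian_bracket D1 D2 D3 s t a u"
proof -
  obtain g where g: "l * s - m * t = u * g"
    using \<open>u dvd l * s - m * t\<close> by (rule dvdE)
  have "l * jacobian_bracket D1 D2 D3 s t a u = jacobian_bracket D1 D2 D3 (l * s - m * t) t a u"
    using D const by (rule jacobian_bracket_combination_left[symmetric])
  also have "\<dots> = jacobian_bracket D1 D2 D3 (u * g) t a u"
    by (simp only: g)
  also have "\<dots> = u * jacobian_bracket D1 D2 D3 g t a u"
    using D by (rule jacobian_bracket_mult_left_self)
  finally have "u dvd l * jacobian_bracket D1 D2 D3 s t a u"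
    by simp
  with \<open>is_unit l\<close> show ?thesis
    by (simp add: dvd_mult_unit_iff')
qed

lemma is_unit_const3: "c \<noteq> 0 \<Longrightarrow> is_unit (const3 c)"
  by (simp add: const3_def is_unit_const_poly_iff dvd_field_iff)

lemma dvd_pbr_self:
  assumes "(la, mu) \<noteq> (0, 0)" and "u dvd const3 la * s - const3 mu * t"
  shows "u dvd pbr s t a u"
proof (cases "la = 0")
  case False
  show ?thesis
    unfolding pbr_eq_jacobian_bracket
    by (rule dvd_jacobian_bracket_self[OF is_derivation_dx is_derivation_dy is_derivation_dz
          derivative_const3 derivative_const3 is_unit_const3[OF False] assms(2)])
next
  case True
  with assms(1) have "- mu \<noteq> 0" by simp
  have const3_uminus: "const3 (- c) = - const3 c" for c
    by (simp add: const3_def)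
  have swap: "const3 la * s - const3 mu * t = const3 (- mu) * t - const3 (- la) * s"
    unfolding const3_uminus by (simp add: algebra_simps)
  have "u dvd jacobian_bracket dx dy dz t s a u"
    by (rule dvd_jacobian_bracket_self[OF is_derivation_dx is_derivation_dy is_derivation_dz
          derivative_const3 derivative_const3 is_unit_const3[OF \<open>- mu \<noteq> 0\<close>]
          assms(2)[unfolded swap]])
  then show ?thesis
    by (simp add: pbr_eq_jacobian_bracket jacobian_bracket_swap[of dx dy dz t s])
qed

lemma principal_ideal_eq: "principal_ideal f = {a. f dvd a}"
  by (auto simp: principal_ideal_def)

lemma is_ideal_principal_ideal: "is_ideal (principal_ideal f)"
  by (simp add: is_ideal_def principal_ideal_eq)

lemma poisson_ideal_principal_ideal:
  assumes "\<And>a c. br a (u * c) = u * br a c + c * br a u" and "\<And>a. u dvd br a u"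
  shows "poisson_ideal br (principal_ideal u)"
  using assms is_ideal_principal_ideal[of u] by (auto simp: poisson_ideal_def principal_ideal_eq)

lemma is_prime_ideal_principal_ideal:
  "prime_elem p \<Longrightarrow> is_prime_ideal (principal_ideal p)"
  using is_ideal_principal_ideal[of p]
  by (auto simp: is_prime_ideal_def principal_ideal_eq prime_elem_dvd_mult_iff dest: prime_elem_not_unit)

theorem lemma3p4:
  fixes s t u :: cpoly3 and la mu :: complex
  assumes "s \<noteq> 0" and "t \<noteq> 0" and "coprime s t"
    and "(la, mu) \<noteq> (0, 0)"
    and "const3 la * s - const3 mu * t \<noteq> 0"
    and "\<not> is_unit (const3 la * s - const3 mu * t)"
    and "irreducible u" and "u dvd (const3 la * s - const3 mu * t)"
  shows "poisson_ideal (pbr s t) (principal_ideal (const3 la * s - const3 mu * t))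
       \<and> poisson_prime_ideal (pbr s t) (principal_ideal u)"
proof -
  have leibniz: "pbr s t a (v * c) = v * pbr s t a c + c * pbr s t a v" for a v c
    unfolding pbr_eq_jacobian_bracket
    using is_derivation_dx is_derivation_dy is_derivation_dz by (rule jacobian_bracket_mult_right)
  have "poisson_ideal (pbr s t) (principal_ideal v)"
    if "v dvd const3 la * s - const3 mu * t" for v
    using leibniz dvd_pbr_self[OF assms(4) that] by (rule poisson_ideal_principal_ideal)
  moreover have "is_prime_ideal (principal_ideal u)"
    using \<open>irreducible u\<close> by (intro is_prime_ideal_principal_ideal irreducible_imp_prime_elem)
  ultimately show ?thesis
    using assms(8) by (simp add: poisson_prime_ideal_def)
qed

end
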